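(* In the setting below, if the $\tilde P$-$s$ chain is locally-$s$-recurrent, then the $P$-$\nu$ chain is locally-$\nu$-recurrent.
   Context: $(\mathcal{X},\mathcal{B})$ and $(\Theta,\mathcal{C})$ are Polish spaces with Borel $\sigma$-algebras; $P(\cdot\mid\theta)$ is a Markov kernel; $\nu$ is a $\sigma$-finite measure on $\Theta$; the marginal $M(B)=\int P(B\mid\theta)\nu(d\theta)$ is $\sigma$-finite; $Q(d\theta\mid x)$ is a Markov kernel with $P(dx\mid\theta)\nu(d\theta)=Q(d\theta\mid x)M(dx)$. The $P$-$\nu$ chain is the Markov chain on $\Theta$ with transition $R(C\mid\eta)=\int Q(C\mid x)P(dx\mid\eta)$. Let $t:\Theta\to[0,\infty)$ be measurable and $s(A)=\nu(t^{-1}(A))$. Assume there are disjoint Borel sets $A_i$, $i\ge1$, covering $[0,\infty)$ with $0<\nu(t^{-1}(A_i))<\infty$. Let $\pi(d\theta\mid a)$ be a Markov kernel with $\int f_2(t(\theta))f_1(\theta)\nu(d\theta)=\int_0^\infty f_2(a)\int f_1(\theta)\pi(d\theta\mid a)\,s(da)$ for all nonnegative measurable $f_1,f_2$. Set $\tilde P(dx\mid a)=\int P(dx\mid\theta)\pi(d\theta\mid a)$ and let $\tilde Q(da\mid x)$ satisfy $\tilde P(dx\mid a)s(da)=\tilde Q(da\mid x)M(dx)$. The $\tilde P$-$s$ chain is the Markov chain on $[0,\infty)$ with transition $\tilde R(da\mid b)=\int\tilde Q(da\mid x)\tilde P(dx\mid b)$. For a Markov chain $W=(W_0,W_1,\dots)$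 on a space with $\sigma$-finite measure $\mu$: a measurable set $C$ is $\mu$-proper if $0<\mu(C)<\infty$; $\tau_C$ is the first $n\ge1$ with $W_n\in C$ ($\infty$ if none) and $E_C=\{\tau_C<\infty\}$; a $\mu$-proper $C$ is locally-$\mu$-recurrent if $\{w_0\in C: P_{w_0}(E_C)<1\}$ has $\mu$-measure zero, where $P_{w_0}$ is the law of the chain started at $w_0$; the chain is locally-$\mu$-recurrent if every $\mu$-proper set is locally-$\mu$-recurrent. *)

theory Defs
  imports "HOL-Probability.Probability"
begin

definition nonneg_reals :: "real measure" where
  "nonneg_reals = restrict_space borel {0..}"

text \<open>Law (on the path space of sequences indexed by nat) of the Markov chain on the
  measurable space Om with transition kernel K, started at w0 (so W_0 = w0 a.s. and
  W_(n+1) is distributed as K (W_n) given the past); constructed via the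
  Ionescu-Tulcea theorem from the library.\<close>
definition chain_law :: "'a measure \<Rightarrow> ('a \<Rightarrow> 'a measure) \<Rightarrow> 'a \<Rightarrow> (nat \<Rightarrow> 'a) measure" where
  "chain_law Om K w0 =
     projective_family.lim UNIV
       (Ionescu_Tulcea.CI (\<lambda>i \<omega>. if i = 0 then return Om w0 else K (\<omega> (i - 1))) (\<lambda>_. Om))
       (\<lambda>_. Om)"

definition return_event :: "'a measure \<Rightarrow> 'a set \<Rightarrow> (nat \<Rightarrow> 'a) set" where
  "return_event Om C = {\<omega> \<in> space (PiM UNIV (\<lambda>_. Om)). \<exists>n\<ge>1. \<omega> n \<in> C}"

definition proper_set :: "'a measure \<Rightarrow> 'a set \<Rightarrow> bool" where
  "proper_set mu C \<longleftrightarrow> C \<in> sets mu \<and> 0 < emeasure mu C \<and> emeasure mu C < \<infinity>"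

definition locally_recurrent_set ::
    "'a measure \<Rightarrow> ('a \<Rightarrow> 'a measure) \<Rightarrow> 'a measure \<Rightarrow> 'a set \<Rightarrow> bool" where
  "locally_recurrent_set Om K mu C \<longleftrightarrow> proper_set mu C \<and>
     (AE w0 in mu. w0 \<in> C \<longrightarrow> \<not> (emeasure (chain_law Om K w0) (return_event Om C) < 1))"

definition locally_recurrent ::
    "'a measure \<Rightarrow> ('a \<Rightarrow> 'a measure) \<Rightarrow> 'a measure \<Rightarrow> bool" where
  "locally_recurrent Om K mu \<longleftrightarrow>
     (\<forall>C. proper_set mu C \<longrightarrow> locally_recurrent_set Om K mu C)"

end

theory Submission
  imports Defs
begin

(* For [0,1]-valued f the Dirichlet form of the symmetric kernel R = P;Q is the energy
   E(f) = \<integral> Var_{Q(.|x)}(f) M(dx) = \<integral> f\<^sup>2 d\<nu> - \<integral> f (Rf) d\<nu>.  For a proper set C, the hitting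
   probability h_C of C equals 1 on C and R h_C off C, so the covariance inequality under each
   posterior Q(.|x) bounds the escape mass \<integral>_C g (1 - R h_C) d\<nu> by \<lambda>/2 E(g) + \<nu>(C)/(2\<lambda>) for
   every [0,1]-valued g.  If the reduced chain is recurrent on a proper set D, the energies of its
   hitting probabilities of D within n steps tend to 0; composing with t preserves energies,
   because Q(.|x) pushed forward by t is Qt(.|x) for M-almost every x.  The composed functions
   equal 1 on t\<^sup>-\<^sup>1(D), so letting n \<rightarrow> \<infinity> and then \<lambda> \<rightarrow> \<infinity> shows that almost every
   point of C \<inter> t\<^sup>-\<^sup>1(D) returns to C almost surely; the sets t\<^sup>-\<^sup>1(A i) cover \<Theta>. *)

definition nn_variance :: "'a measure \<Rightarrow> ('a \<Rightarrow> ennreal) \<Rightarrow> real" where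
  "nn_variance N f = enn2real (\<integral>\<^sup>+x. f x * f x \<partial>N) - (enn2real (\<integral>\<^sup>+x. f x \<partial>N))\<^sup>2"

lemma real_covariance_bound:
  fixes F G :: "'a \<Rightarrow> real"
  assumes N: "prob_space N" and [measurable]: "F \<in> borel_measurable N" "G \<in> borel_measurable N"
    and F: "\<And>x. 0 \<le> F x \<and> F x \<le> 1" and G: "\<And>x. 0 \<le> G x \<and> G x \<le> 1" and lam: "lam > 0"
  shows "2 * lam * ((\<integral>x. F x * G x \<partial>N) - (\<integral>x. F x \<partial>N) * (\<integral>x. G x \<partial>N))
     \<le> lam\<^sup>2 * ((\<integral>x. F x * F x \<partial>N) - (\<integral>x. F x \<partial>N)\<^sup>2) + ((\<integral>x. G x * G x \<partial>N) - (\<integral>x. G x \<partial>N)\<^sup>2)"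
proof -
  interpret prob_space N by (rule N)
  define a where "a = (\<integral>x. F x \<partial>N)"
  define b where "b = (\<integral>x. G x \<partial>N)"
  have bounded: "integrable N H" if "H \<in> borel_measurable N" "\<And>x. \<bar>H x\<bar> \<le> 1" for H :: "'a \<Rightarrow> real"
    using that by (intro integrable_const_bound[where B=1]) auto
  have "integrable N F" "integrable N G" "integrable N (\<lambda>x. F x * G x)"
    "integrable N (\<lambda>x. F x * F x)" "integrable N (\<lambda>x. G x * G x)"
    using F G by (auto intro!: bounded mult_le_one simp: abs_mult)
  moreover have "(\<integral>x. (lam * (F x - a) - (G x - b))\<^sup>2 \<partial>N) =
      (\<integral>x. lam\<^sup>2 * (F x * F x) + G x * G x - 2 * lam * (F x * G x)
        + (2 * lam * b - 2 * lam\<^sup>2 * a) * F x + (2 * lam * a - 2 * b) * G x + (lam * a - b)\<^sup>2 \<partial>N)"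
    by (intro Bochner_Integration.integral_cong) (auto simp: power2_eq_square algebra_simps)
  ultimately have "(\<integral>x. (lam * (F x - a) - (G x - b))\<^sup>2 \<partial>N) =
      lam\<^sup>2 * (\<integral>x. F x * F x \<partial>N) + (\<integral>x. G x * G x \<partial>N) - 2 * lam * (\<integral>x. F x * G x \<partial>N)
      + (2 * lam * b - 2 * lam\<^sup>2 * a) * a + (2 * lam * a - 2 * b) * b + (lam * a - b)\<^sup>2"
    by (simp add: a_def b_def prob_space)
  moreover have "0 \<le> (\<integral>x. (lam * (F x - a) - (G x - b))\<^sup>2 \<partial>N)" by simp
  ultimately show ?thesis unfolding a_def[symmetric] b_def[symmetric]
    by (simp add: power2_eq_square algebra_simps)
qed

lemma nn_integral_eq_integral_enn2real:
  fixes f :: "'a \<Rightarrow> ennreal"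
  assumes "prob_space N" and fm[measurable]: "f \<in> borel_measurable N" and f: "\<And>x. f x \<le> 1"
  shows "(\<integral>\<^sup>+x. f x \<partial>N) = ennreal (\<integral>x. enn2real (f x) \<partial>N)"
proof -
  interpret prob_space N by fact
  have "f x = ennreal (enn2real (f x))" for x
    using f[of x] by (metis ennreal_enn2real ennreal_one_less_top le_less_trans less_top)
  then have "(\<integral>\<^sup>+x. f x \<partial>N) = (\<integral>\<^sup>+x. ennreal (enn2real (f x)) \<partial>N)"
    by simp
  also have "\<dots> = ennreal (\<integral>x. enn2real (f x) \<partial>N)"
    using f by (intro nn_integral_eq_integral integrable_const_bound[where B=1]) (auto intro!: AE_I2 enn2real_leI)
  finally show ?thesis .
qed

lemma nn_integral_mult_eq_integral_enn2real:
  fixes f g :: "'a \<Rightarrow> ennreal"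
  assumes N: "prob_space N" and fm[measurable]: "f \<in> borel_measurable N" and gm[measurable]: "g \<in> borel_measurable N"
    and f: "\<And>x. f x \<le> 1" and g: "\<And>x. g x \<le> 1"
  shows "(\<integral>\<^sup>+x. f x * g x \<partial>N) = ennreal (\<integral>x. enn2real (f x) * enn2real (g x) \<partial>N)"
  using nn_integral_eq_integral_enn2real[OF N, of "\<lambda>x. f x * g x"] f g
  by (simp add: enn2real_mult mult_le_one)

lemma nn_variance_eq_real:
  fixes f :: "'a \<Rightarrow> ennreal"
  assumes N: "prob_space N" and fm[measurable]: "f \<in> borel_measurable N" and f: "\<And>x. f x \<le> 1"
  shows "nn_variance N f = (\<integral>x. enn2real (f x) * enn2real (f x) \<partial>N) - (\<integral>x. enn2real (f x) \<partial>N)\<^sup>2"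
  unfolding nn_variance_def nn_integral_eq_integral_enn2real[OF N fm f]
    nn_integral_mult_eq_integral_enn2real[OF N fm fm f f]
  by (simp add: integral_nonneg_AE)

lemma nn_variance_nonneg:
  fixes f :: "'a \<Rightarrow> ennreal"
  assumes N: "prob_space N" and fm[measurable]: "f \<in> borel_measurable N" and f: "\<And>x. f x \<le> 1"
  shows "0 \<le> nn_variance N f"
  using real_covariance_bound[OF N, of "\<lambda>x. enn2real (f x)" "\<lambda>_. 0" 1] f
  by (simp add: nn_variance_eq_real[OF N fm f] enn2real_leI)

lemma nn_integral_square_eq_variance:
  fixes f :: "'a \<Rightarrow> ennreal"
  assumes N: "prob_space N" and fm[measurable]: "f \<in> borel_measurable N" and f: "\<And>x. f x \<le> 1"
  shows "(\<integral>\<^sup>+x. f x * f x \<partial>N) = (\<integral>\<^sup>+x. f x \<partial>N) * (\<integral>\<^sup>+x. f x \<partial>N) + ennreal (nn_variance N f)"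
  using nn_variance_nonneg[OF N fm f] nn_variance_eq_real[OF N fm f]
  unfolding nn_integral_eq_integral_enn2real[OF N fm f] nn_integral_mult_eq_integral_enn2real[OF N fm fm f f]
  by (simp add: ennreal_mult[symmetric] ennreal_plus[symmetric] power2_eq_square integral_nonneg_AE
      del: ennreal_plus)

lemma nn_integral_mult_le_variances:
  fixes f g :: "'a \<Rightarrow> ennreal"
  assumes N: "prob_space N" and fm[measurable]: "f \<in> borel_measurable N" and gm[measurable]: "g \<in> borel_measurable N"
    and f: "\<And>x. f x \<le> 1" and g: "\<And>x. g x \<le> 1" and lam: "lam > 0"
  shows "(\<integral>\<^sup>+x. f x * g x \<partial>N) \<le> (\<integral>\<^sup>+x. f x \<partial>N) * (\<integral>\<^sup>+x. g x \<partial>N)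
     + ennreal (lam / 2) * ennreal (nn_variance N f) + ennreal (1 / (2 * lam)) * ennreal (nn_variance N g)"
proof -
  define F where "F x = enn2real (f x)" for x
  define G where "G x = enn2real (g x)" for x
  have "2 * lam * ((\<integral>x. F x * G x \<partial>N) - (\<integral>x. F x \<partial>N) * (\<integral>x. G x \<partial>N))
     \<le> lam\<^sup>2 * nn_variance N f + nn_variance N g"
    unfolding nn_variance_eq_real[OF N fm f] nn_variance_eq_real[OF N gm g] F_def G_def
    using f g by (intro real_covariance_bound[OF N _ _ _ _ lam]) (auto intro: enn2real_leI)
  also have "\<dots> = 2 * lam * (lam / 2 * nn_variance N f + 1 / (2 * lam) * nn_variance N g)"
    using lam by (simp add: field_simps power2_eq_square)
  finally have "(\<integral>x. F x * G x \<partial>N) - (\<integral>x. F x \<partial>N) * (\<integral>x. G x \<partial>N)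
      \<le> lam / 2 * nn_variance N f + 1 / (2 * lam) * nn_variance N g"
    by (rule mult_left_le_imp_le) (use lam in simp)
  then show ?thesis
    using nn_variance_nonneg[OF N fm f] nn_variance_nonneg[OF N gm g] lam
    unfolding nn_integral_eq_integral_enn2real[OF N fm f] nn_integral_eq_integral_enn2real[OF N gm g]
      nn_integral_mult_eq_integral_enn2real[OF N fm gm f g] F_def G_def
    by (simp add: ennreal_mult[symmetric] ennreal_plus[symmetric] integral_nonneg_AE del: ennreal_plus)
qed

lemma tendsto_nn_variance_SUP:
  fixes f :: "nat \<Rightarrow> 'a \<Rightarrow> ennreal"
  assumes N: "prob_space N" and [measurable]: "\<And>n. f n \<in> borel_measurable N"
    and f: "\<And>n x. f n x \<le> 1" and inc: "\<And>n x. f n x \<le> f (Suc n) x"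
  shows "(\<lambda>n. nn_variance N (f n)) \<longlonglongrightarrow> nn_variance N (\<lambda>x. SUP n. f n x)"
proof -
  interpret prob_space N by fact
  let ?f = "\<lambda>x. SUP n. f n x"
  have f_le: "?f x \<le> 1" for x by (simp add: SUP_least f)
  have lim: "(\<lambda>n. f n x) \<longlonglongrightarrow> ?f x" for x by (rule LIMSEQ_SUP) (simp add: incseq_SucI inc)
  have lim_sq: "(\<lambda>n. f n x * f n x) \<longlonglongrightarrow> ?f x * ?f x" for x
  proof (rule tendsto_mult_ennreal[OF lim lim])
    show "\<not> (?f x = 0 \<and> ?f x = \<infinity> \<or> ?f x = \<infinity> \<and> ?f x = 0)"
      by (metis ennreal_zero_neq_top infinity_ennreal_def)
  qed
  have mono_sq: "f n x * f n x \<le> f (Suc n) x * f (Suc n) x" for n x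
    using inc by (intro mult_mono) auto
  have integral_le_1: "(\<integral>\<^sup>+x. g x \<partial>N) \<le> 1" if "\<And>x. g x \<le> 1" for g
    using nn_integral_mono[of N g "\<lambda>_. 1"] that by (simp add: emeasure_space_1)
  have enn2real_lim: "(\<lambda>n. enn2real (u n)) \<longlonglongrightarrow> enn2real L" if "u \<longlonglongrightarrow> L" "L \<le> 1" for u L
    using that by (intro tendsto_enn2real) (auto simp: ennreal_enn2real_if top_unique)
  have "(\<lambda>n. \<integral>\<^sup>+x. f n x \<partial>N) \<longlonglongrightarrow> (\<integral>\<^sup>+x. ?f x \<partial>N)"
    by (rule nn_integral_LIMSEQ) (auto intro!: incseq_SucI le_funI inc lim)
  moreover have "(\<lambda>n. \<integral>\<^sup>+x. f n x * f n x \<partial>N) \<longlonglongrightarrow> (\<integral>\<^sup>+x. ?f x * ?f x \<partial>N)"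
    by (rule nn_integral_LIMSEQ) (auto intro!: incseq_SucI le_funI mono_sq lim_sq)
  ultimately show ?thesis
    unfolding nn_variance_def using f_le
    by (intro tendsto_diff tendsto_power enn2real_lim integral_le_1) (auto intro: mult_le_one)
qed

lemma ennreal_eq_0_if_le_epsilon_mult:
  fixes z c :: ennreal
  assumes c: "c \<noteq> \<infinity>" and le: "\<And>e::real. e > 0 \<Longrightarrow> z \<le> ennreal e * c"
  shows "z = 0"
proof -
  obtain r where r: "c = ennreal r" "r \<ge> 0"
    using c by (cases c) auto
  have "z \<le> 0 + ennreal e" if e: "e > 0" for e
  proof -
    have "z \<le> ennreal (e / (r + 1) * r)"
      using le[of "e / (r + 1)"] e r by (simp add: ennreal_mult[symmetric])
    also have "\<dots> \<le> ennreal e"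
      using e r by (intro ennreal_leI) (simp add: field_simps)
    finally show ?thesis by simp
  qed
  then have "z \<le> 0" by (rule ennreal_le_epsilon)
  then show ?thesis by simp
qed

locale markov_kernel =
  fixes Om :: "'a measure" and K :: "'a \<Rightarrow> 'a measure"
  assumes kernel: "K \<in> Om \<rightarrow>\<^sub>M prob_algebra Om"
begin

lemma kernel_subprob[measurable]: "K \<in> Om \<rightarrow>\<^sub>M subprob_algebra Om"
  using kernel by (rule measurable_prob_algebraD)

lemma sets_K: "w \<in> space Om \<Longrightarrow> sets (K w) = sets Om"
  using measurable_space[OF kernel] by (auto simp: space_prob_algebra)

lemma prob_space_K: "w \<in> space Om \<Longrightarrow> prob_space (K w)"
  using measurable_space[OF kernel] by (auto simp: space_prob_algebra)

lemma measurable_K_cong: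
  "w \<in> space Om \<Longrightarrow> f \<in> borel_measurable (K w) \<longleftrightarrow> f \<in> borel_measurable Om"
  by (simp add: measurable_cong_sets[OF sets_K refl])

(* The value 0 outside space Om is junk that makes Kop_le_1 and Kop_mono unconditional. *)
definition Kop :: "('a \<Rightarrow> ennreal) \<Rightarrow> 'a \<Rightarrow> ennreal" where
  "Kop f w = (if w \<in> space Om then \<integral>\<^sup>+y. f y \<partial>K w else 0)"

lemma Kop_measurable[measurable]:
  assumes [measurable]: "f \<in> borel_measurable Om" shows "Kop f \<in> borel_measurable Om"
  unfolding Kop_def[abs_def] by measurable

lemma Kop_mono: "(\<And>y. f y \<le> g y) \<Longrightarrow> Kop f w \<le> Kop g w"
  unfolding Kop_def by (auto intro!: nn_integral_mono)

lemma Kop_cong: "w \<in> space Om \<Longrightarrow> (\<And>y. y \<in> space Om \<Longrightarrow> f y = g y) \<Longrightarrow> Kop f w = Kop g w"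
  unfolding Kop_def by (auto intro!: nn_integral_cong simp: sets_eq_imp_space_eq[OF sets_K])

lemma Kop_le_1:
  assumes "\<And>y. f y \<le> 1" shows "Kop f w \<le> 1"
proof (cases "w \<in> space Om")
  case True
  interpret prob_space "K w" using prob_space_K[OF True] .
  have "(\<integral>\<^sup>+y. f y \<partial>K w) \<le> (\<integral>\<^sup>+y. 1 \<partial>K w)" by (intro nn_integral_mono assms)
  then show ?thesis using True by (simp add: Kop_def emeasure_space_1)
qed (simp add: Kop_def)

lemma Kop_one_minus:
  assumes [measurable]: "f \<in> borel_measurable Om" and f: "\<And>y. f y \<le> 1" and w: "w \<in> space Om"
  shows "Kop (\<lambda>y. 1 - f y) w = 1 - Kop f w"
proof -
  interpret prob_space "K w" using prob_space_K[OF w] .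
  have "(\<integral>\<^sup>+y. f y \<partial>K w) \<le> (\<integral>\<^sup>+y. 1 \<partial>K w)" by (intro nn_integral_mono f)
  then have "(\<integral>\<^sup>+y. 1 - f y \<partial>K w) = (\<integral>\<^sup>+y. 1 \<partial>K w) - (\<integral>\<^sup>+y. f y \<partial>K w)"
    using w f by (intro nn_integral_diff) (auto simp: emeasure_space_1 top_unique measurable_K_cong)
  then show ?thesis using w by (simp add: Kop_def emeasure_space_1)
qed

lemma Kop_SUP:
  assumes [measurable]: "\<And>n. f n \<in> borel_measurable Om" and "\<And>n y. f n y \<le> f (Suc n) y"
  shows "Kop (\<lambda>y. SUP n. f n y) w = (SUP n. Kop (f n) w)"
  using assms unfolding Kop_def
  by (auto intro!: nn_integral_monotone_convergence_SUP_AE simp: measurable_K_cong)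

(* hit_within C n w is the probability that the chain started at w is in C at one of the times
   0, ..., n; hence Kop (hit C) w is the probability P_w(E_C) of a return to C. *)
primrec hit_within :: "'a set \<Rightarrow> nat \<Rightarrow> 'a \<Rightarrow> ennreal" where
  "hit_within C 0 = indicator C"
| "hit_within C (Suc n) = (\<lambda>w. indicator C w + indicator (- C) w * Kop (hit_within C n) w)"

definition hit :: "'a set \<Rightarrow> 'a \<Rightarrow> ennreal" where
  "hit C w = (SUP n. hit_within C n w)"

lemma hit_within_in: "w \<in> C \<Longrightarrow> hit_within C n w = 1"
  by (cases n) auto

lemma hit_within_Suc_outside: "w \<notin> C \<Longrightarrow> hit_within C (Suc n) w = Kop (hit_within C n) w"
  by simp

context
  fixes C assumes C[measurable]: "C \<in> sets Om"
begin

lemma hit_within_measurable[measurable]: "hit_within C n \<in> borel_measurable Om"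
  by (induction n) simp_all

lemma hit_measurable[measurable]: "hit C \<in> borel_measurable Om"
  unfolding hit_def[abs_def] by measurable

lemma hit_within_le_1: "hit_within C n w \<le> 1"
  by (induction n arbitrary: w) (auto simp: indicator_def intro: Kop_le_1)

lemma hit_within_Suc_mono: "hit_within C n w \<le> hit_within C (Suc n) w"
proof (induction n arbitrary: w)
  case (Suc n) then show ?case
    by (cases "w \<in> C")
      (simp_all add: hit_within_in hit_within_Suc_outside Kop_mono[OF Suc.IH] del: hit_within.simps(2))
qed (simp add: indicator_def)

lemma hit_le_1: "hit C w \<le> 1"
  unfolding hit_def by (auto intro!: SUP_least hit_within_le_1)

lemma Kop_hit: "Kop (hit C) w = (SUP n. Kop (hit_within C n) w)"
  unfolding hit_def by (rule Kop_SUP[where f="hit_within C", OF hit_within_measurable hit_within_Suc_mono])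

end

lemma hit_in: "w \<in> C \<Longrightarrow> hit C w = 1"
  by (simp add: hit_def hit_within_in)

lemma hit_outside:
  assumes C[measurable]: "C \<in> sets Om" and w: "w \<notin> C"
  shows "hit C w = Kop (hit C) w"
proof -
  have "hit C w = (SUP n. hit_within C (Suc n) w)"
    unfolding hit_def
  proof (rule antisym)
    show "(SUP n. hit_within C n w) \<le> (SUP n. hit_within C (Suc n) w)"
      by (rule SUP_mono) (use hit_within_Suc_mono[OF C] in blast)
  qed (rule SUP_mono, blast)
  also have "\<dots> = Kop (hit C) w"
    using w by (simp add: Kop_hit)
  finally show ?thesis .
qed

lemma hit_eq_escape_plus_Kop:
  assumes C[measurable]: "C \<in> sets Om"
  shows "hit C w = indicator C w * (1 - Kop (hit C) w) + Kop (hit C) w"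
proof -
  have "Kop (hit C) w \<le> 1" by (intro Kop_le_1 hit_le_1[OF C])
  then show ?thesis
    using hit_outside[OF C, of w] by (cases "w \<in> C") (simp_all add: hit_in diff_add_cancel_ennreal)
qed

lemma hit_within_square_le:
  assumes C[measurable]: "C \<in> sets Om"
  shows "hit_within C n w * hit_within C n w
    \<le> indicator C w * (1 - Kop (hit_within C n) w) + hit_within C n w * Kop (hit_within C n) w"
proof (cases "w \<in> C")
  case True
  have "Kop (hit_within C n) w \<le> 1" by (intro Kop_le_1 hit_within_le_1[OF C])
  with True show ?thesis by (simp add: hit_within_in diff_add_cancel_ennreal)
next
  case False
  have "hit_within C n w \<le> Kop (hit_within C n) w"
  proof (cases n)
    case (Suc k)
    then show ?thesis using False
      by (simp add: hit_within_Suc_outside Kop_mono hit_within_Suc_mono[OF C] del: hit_within.simps(2))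
  qed (simp add: False)
  then show ?thesis using False by (simp add: mult_left_mono)
qed

lemma nn_integral_mult_Kop_le:
  assumes "\<And>y. f y \<le> 1"
  shows "(\<integral>\<^sup>+w. h w * Kop f w \<partial>N) \<le> (\<integral>\<^sup>+w. h w \<partial>N)"
  using Kop_le_1[OF assms] by (intro nn_integral_mono) (simp add: mult_left_le)

definition avoid_step :: "'a set \<Rightarrow> ('a \<Rightarrow> ennreal) \<Rightarrow> 'a \<Rightarrow> ennreal" where
  "avoid_step C psi = Kop (\<lambda>y. indicator (- C) y * psi y)"

lemma avoid_step_measurable[measurable]:
  assumes [measurable]: "C \<in> sets Om" "psi \<in> borel_measurable Om"
  shows "avoid_step C psi \<in> borel_measurable Om"
  unfolding avoid_step_def by measurable

lemma avoid_step_funpow_one: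
  assumes C[measurable]: "C \<in> sets Om"
  shows "w \<in> space Om \<Longrightarrow> (avoid_step C ^^ Suc n) (\<lambda>_. 1) w = 1 - Kop (hit_within C n) w"
proof (induction n arbitrary: w)
  case 0
  have "(\<lambda>y. indicator (- C) y * (1::ennreal)) = (\<lambda>y. 1 - indicator C y)"
    by (auto simp: fun_eq_iff indicator_def)
  with 0 show ?case by (simp add: avoid_step_def Kop_one_minus indicator_def)
next
  case (Suc n)
  have "(avoid_step C ^^ Suc (Suc n)) (\<lambda>_. 1) w
      = Kop (\<lambda>y. indicator (- C) y * (avoid_step C ^^ Suc n) (\<lambda>_. 1) y) w"
    by (simp add: avoid_step_def)
  also have "\<dots> = Kop (\<lambda>y. 1 - hit_within C (Suc n) y) w"
    using Suc.IH by (intro Kop_cong[OF Suc.prems])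
      (auto simp: hit_within_in hit_within_Suc_outside indicator_def simp del: hit_within.simps(2) funpow.simps)
  also have "\<dots> = 1 - Kop (hit_within C (Suc n)) w"
    using Suc.prems by (intro Kop_one_minus) (auto intro: hit_within_le_1[OF C] simp del: hit_within.simps)
  finally show ?case .
qed

end

locale markov_chain_from = markov_kernel +
  fixes w0 assumes w0: "w0 \<in> space Om"
begin

definition path_kernel :: "nat \<Rightarrow> (nat \<Rightarrow> 'a) \<Rightarrow> 'a measure" where
  "path_kernel i \<omega> = (if i = 0 then return Om w0 else K (\<omega> (i - 1)))"

lemma path_kernel_measurable: "path_kernel i \<in> Pi\<^sub>M {0..<i} (\<lambda>_. Om) \<rightarrow>\<^sub>M subprob_algebra Om"
proof (cases i)
  case 0
  have "return Om w0 \<in> space (subprob_algebra Om)"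
    using w0 by (simp add: space_subprob_algebra subprob_space_return)
  then show ?thesis using 0 by (simp add: path_kernel_def[abs_def])
next
  case (Suc j)
  have "(\<lambda>\<omega>. \<omega> j) \<in> Pi\<^sub>M {0..<i} (\<lambda>_. Om) \<rightarrow>\<^sub>M Om"
    by (rule measurable_component_singleton) (simp add: Suc)
  from measurable_compose[OF this kernel_subprob] show ?thesis
    using Suc by (simp add: path_kernel_def[abs_def])
qed

lemma prob_space_path_kernel: "\<omega> \<in> space (Pi\<^sub>M {0..<i} (\<lambda>_. Om)) \<Longrightarrow> prob_space (path_kernel i \<omega>)"
  using w0 by (cases i) (auto simp: path_kernel_def prob_space_return space_PiM intro: prob_space_K)

sublocale IT: Ionescu_Tulcea path_kernel "\<lambda>_. Om"
  unfolding Ionescu_Tulcea_def using path_kernel_measurable prob_space_path_kernel by blast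

lemma chain_law_eq: "chain_law Om K w0 = IT.PF.lim"
  unfolding chain_law_def path_kernel_def[abs_def] ..

(* The law of (W_0, ..., W_(n-1)). *)
abbreviation path_law :: "nat \<Rightarrow> (nat \<Rightarrow> 'a) measure" where
  "path_law n \<equiv> IT.C 0 n (\<lambda>_. undefined)"

declare IT.C.simps[simp del]

lemma undefined_in_space_PiM_empty: "(\<lambda>_. undefined) \<in> space (PiM {0..<0::nat} (\<lambda>_. Om))"
  by (simp add: space_PiM PiE_def extensional_def Pi_def)

lemma space_path_law: "space (path_law n) = space (PiM {0..<n} (\<lambda>_. Om))"
  using IT.space_C[OF undefined_in_space_PiM_empty] by simp

lemma sets_path_law: "sets (path_law n) = sets (PiM {0..<n} (\<lambda>_. Om))"
  using IT.sets_C[OF undefined_in_space_PiM_empty] by simp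

definition avoids :: "'a set \<Rightarrow> nat \<Rightarrow> (nat \<Rightarrow> 'a) set" where
  "avoids C m = {\<omega>. \<forall>k\<in>{1..m}. \<omega> k \<notin> C}"

lemma avoids_measurable:
  assumes [measurable]: "C \<in> sets Om" and "m < n"
  shows "space (PiM {0..<n} (\<lambda>_. Om)) \<inter> avoids C m \<in> sets (PiM {0..<n} (\<lambda>_. Om))"
proof -
  have "Measurable.pred (PiM {0..<n} (\<lambda>_. Om)) (\<lambda>\<omega>. \<forall>k\<in>{1..m}. \<omega> k \<notin> C)"
  proof (rule pred_intros_finite(3))
    fix i assume i: "i \<in> {1..m}"
    have [measurable]: "(\<lambda>\<omega>. \<omega> i) \<in> PiM {0..<n} (\<lambda>_. Om) \<rightarrow>\<^sub>M Om"
      by (rule measurable_component_singleton) (use i \<open>m < n\<close> in auto)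
    show "Measurable.pred (PiM {0..<n} (\<lambda>_. Om)) (\<lambda>\<omega>. \<omega> i \<notin> C)" by measurable
  qed simp
  then show ?thesis by (simp add: Measurable.pred_def avoids_def Int_def conj_commute)
qed

lemma avoids_times_measurable:
  fixes psi :: "'a \<Rightarrow> ennreal"
  assumes C[measurable]: "C \<in> sets Om" and [measurable]: "psi \<in> borel_measurable Om" and "m < n"
  shows "(\<lambda>\<omega>. indicator (avoids C m) \<omega> * psi (\<omega> m)) \<in> borel_measurable (PiM {0..<n} (\<lambda>_. Om))"
proof -
  have [measurable]: "(\<lambda>\<omega>. \<omega> m) \<in> PiM {0..<n} (\<lambda>_. Om) \<rightarrow>\<^sub>M Om"
    using \<open>m < n\<close> by (intro measurable_component_singleton) auto
  show ?thesis
    using avoids_measurable[OF C \<open>m < n\<close>]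
    by (intro borel_measurable_times_ennreal borel_measurable_indicator') (auto simp: Int_def)
qed

lemma nn_integral_eP_avoids:
  assumes C[measurable]: "C \<in> sets Om" and [measurable]: "psi \<in> borel_measurable Om"
    and \<omega>: "\<omega> \<in> space (PiM {0..<Suc m} (\<lambda>_. Om))"
  shows "(\<integral>\<^sup>+\<omega>'. indicator (avoids C (Suc m)) \<omega>' * psi (\<omega>' (Suc m)) \<partial>IT.eP (Suc m) \<omega>)
    = indicator (avoids C m) \<omega> * avoid_step C psi (\<omega> m)"
proof -
  have \<omega>m: "\<omega> m \<in> space Om" using \<omega> by (auto simp: space_PiM)
  have "(\<integral>\<^sup>+\<omega>'. indicator (avoids C (Suc m)) \<omega>' * psi (\<omega>' (Suc m)) \<partial>IT.eP (Suc m) \<omega>)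
      = (\<integral>\<^sup>+x. indicator (avoids C (Suc m)) (fun_upd \<omega> (Suc m) x) * psi x \<partial>K (\<omega> m))"
    using IT.nn_integral_eP[OF \<omega> avoids_times_measurable[OF C, of psi "Suc m"]]
    by (simp add: path_kernel_def)
  also have "\<dots> = (\<integral>\<^sup>+x. indicator (avoids C m) \<omega> * (indicator (- C) x * psi x) \<partial>K (\<omega> m))"
    by (intro nn_integral_cong) (auto simp: indicator_def avoids_def atLeastAtMostSuc_conv)
  also have "\<dots> = indicator (avoids C m) \<omega> * avoid_step C psi (\<omega> m)"
    using \<omega>m by (simp add: nn_integral_cmult measurable_K_cong avoid_step_def Kop_def)
  finally show ?thesis .
qed

lemma nn_integral_avoids:
  assumes C[measurable]: "C \<in> sets Om"
  shows "psi \<in> borel_measurable Om \<Longrightarrow>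
    (\<integral>\<^sup>+\<omega>. indicator (avoids C m) \<omega> * psi (\<omega> m) \<partial>path_law (Suc m)) = (avoid_step C ^^ m) psi w0"
proof (induction m arbitrary: psi)
  case 0
  have "path_law (Suc 0) = IT.eP 0 (\<lambda>_. undefined)"
    using bind_return[OF IT.measurable_eP undefined_in_space_PiM_empty] by (simp add: IT.C.simps)
  then have "(\<integral>\<^sup>+\<omega>. indicator (avoids C 0) \<omega> * psi (\<omega> 0) \<partial>path_law (Suc 0)) = (\<integral>\<^sup>+x. psi x \<partial>return Om w0)"
    using undefined_in_space_PiM_empty 0 by (simp add: avoids_def IT.nn_integral_eP path_kernel_def)
  then show ?case
    using w0 0 by (simp add: nn_integral_return)
next
  case (Suc m)
  have "(\<integral>\<^sup>+\<omega>. indicator (avoids C (Suc m)) \<omega> * psi (\<omega> (Suc m)) \<partial>path_law (Suc (Suc m)))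
     = (\<integral>\<^sup>+\<omega>. indicator (avoids C (Suc m)) \<omega> * psi (\<omega> (Suc m)) \<partial>(path_law (Suc m) \<bind> IT.eP (Suc m)))"
    by (simp add: IT.C.simps)
  also have "\<dots> = (\<integral>\<^sup>+\<omega>. (\<integral>\<^sup>+\<omega>'. indicator (avoids C (Suc m)) \<omega>' * psi (\<omega>' (Suc m)) \<partial>IT.eP (Suc m) \<omega>)
         \<partial>path_law (Suc m))"
    using IT.measurable_eP[of "Suc m"]
    by (intro nn_integral_bind[OF avoids_times_measurable[OF C Suc.prems, of "Suc m" "Suc (Suc m)"]])
      (simp_all add: measurable_cong_sets[OF sets_path_law refl])
  also have "\<dots> = (\<integral>\<^sup>+\<omega>. indicator (avoids C m) \<omega> * avoid_step C psi (\<omega> m) \<partial>path_law (Suc m))"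
    using Suc.prems by (intro nn_integral_cong nn_integral_eP_avoids[OF C]) (simp_all add: space_path_law)
  also have "\<dots> = (avoid_step C ^^ Suc m) psi w0"
    using Suc.prems by (simp add: Suc.IH funpow_swap1)
  finally show ?case .
qed

definition return_within :: "'a set \<Rightarrow> nat \<Rightarrow> (nat \<Rightarrow> 'a) set" where
  "return_within C n = {\<omega> \<in> space (PiM UNIV (\<lambda>_. Om)). \<exists>k\<in>{1..Suc n}. \<omega> k \<in> C}"

lemma return_within_eq_emb:
  "return_within C n = IT.PF.emb UNIV {0..<Suc (Suc n)}
     (space (PiM {0..<Suc (Suc n)} (\<lambda>_. Om)) - space (PiM {0..<Suc (Suc n)} (\<lambda>_. Om)) \<inter> avoids C (Suc n))"
  unfolding return_within_def avoids_def prod_emb_def by (auto simp: space_PiM PiE_iff)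

lemma emeasure_return_within:
  assumes C[measurable]: "C \<in> sets Om"
  shows "emeasure IT.PF.lim (return_within C n) = Kop (hit_within C n) w0"
proof -
  interpret prob_space "path_law (Suc (Suc n))"
    by (rule IT.prob_space_C[OF undefined_in_space_PiM_empty])
  let ?\<Omega> = "space (PiM {0..<Suc (Suc n)} (\<lambda>_. Om))"
  let ?avoid = "?\<Omega> \<inter> avoids C (Suc n)"
  have avoid_sets: "?avoid \<in> sets (PiM {0..<Suc (Suc n)} (\<lambda>_. Om))"
    by (rule avoids_measurable[OF C]) simp
  then have return_sets: "?\<Omega> - ?avoid \<in> sets (PiM {0..<Suc (Suc n)} (\<lambda>_. Om))"
    by auto
  have "emeasure IT.PF.lim (return_within C n) = emeasure (IT.CI {0..<Suc (Suc n)}) (?\<Omega> - ?avoid)"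
    unfolding return_within_eq_emb by (rule IT.lim[OF _ return_sets]) simp
  also have "\<dots> = emeasure (path_law (Suc (Suc n))) (?\<Omega> - ?avoid)"
    using IT.emeasure_CI[OF order_refl return_sets] prod_emb_id[of "?\<Omega> - ?avoid"]
    by (simp add: space_PiM del: prod_emb_Diff)
  also have "\<dots> = 1 - emeasure (path_law (Suc (Suc n))) ?avoid"
    using avoid_sets unfolding space_path_law[symmetric]
    by (subst emeasure_compl) (simp_all add: sets_path_law emeasure_space_1)
  also have "emeasure (path_law (Suc (Suc n))) ?avoid = (\<integral>\<^sup>+\<omega>. indicator ?avoid \<omega> \<partial>path_law (Suc (Suc n)))"
    using avoid_sets by (simp add: sets_path_law)
  also have "\<dots> = (\<integral>\<^sup>+\<omega>. indicator (avoids C (Suc n)) \<omega> * 1 \<partial>path_law (Suc (Suc n)))"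
    by (intro nn_integral_cong) (simp add: space_path_law indicator_def)
  also have "\<dots> = 1 - Kop (hit_within C n) w0"
    using nn_integral_avoids[OF C, of "\<lambda>_. 1"] avoid_step_funpow_one[OF C w0] by simp
  also have "1 - (1 - Kop (hit_within C n) w0) = Kop (hit_within C n) w0"
    by (rule diff_diff_ennreal) (auto intro: Kop_le_1 hit_within_le_1[OF C])
  finally show ?thesis .
qed

lemma emeasure_return_event:
  assumes C[measurable]: "C \<in> sets Om"
  shows "emeasure (chain_law Om K w0) (return_event Om C) = Kop (hit C) w0"
proof -
  have "return_event Om C = (\<Union>n. return_within C n)"
  proof (intro set_eqI iffI)
    fix \<omega> assume "\<omega> \<in> return_event Om C"
    then obtain n where "n \<ge> 1" "\<omega> n \<in> C" "\<omega> \<in> space (PiM UNIV (\<lambda>_. Om))"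
      unfolding return_event_def by auto
    then have "\<omega> \<in> return_within C (n - 1)" unfolding return_within_def by auto
    then show "\<omega> \<in> (\<Union>n. return_within C n)" by blast
  qed (auto simp: return_event_def return_within_def)
  moreover have "range (return_within C) \<subseteq> sets IT.PF.lim"
    using avoids_measurable[OF C] by (auto simp: return_within_eq_emb)
  moreover have "incseq (return_within C)"
    by (rule incseq_SucI) (auto simp: return_within_def)
  ultimately show ?thesis
    by (simp add: chain_law_eq SUP_emeasure_incseq[symmetric] emeasure_return_within Kop_hit[OF C])
qed

end

lemma (in markov_kernel) locally_recurrent_set_iff:
  assumes sets_mu: "sets mu = sets Om" and C: "proper_set mu C"
  shows "locally_recurrent_set Om K mu C \<longleftrightarrow> (AE w in mu. w \<in> C \<longrightarrow> Kop (hit C) w = 1)"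
proof -
  have [measurable]: "C \<in> sets Om" using C sets_mu by (simp add: proper_set_def)
  have "emeasure (chain_law Om K w) (return_event Om C) = Kop (hit C) w" if "w \<in> space Om" for w
  proof -
    interpret markov_chain_from Om K w by unfold_locales (fact that)
    show ?thesis by (rule emeasure_return_event) simp
  qed
  moreover have "Kop (hit C) w \<le> 1" for w
    by (intro Kop_le_1 hit_le_1) simp
  ultimately show ?thesis
    using C by (auto simp: locally_recurrent_set_def sets_eq_imp_space_eq[OF sets_mu] not_less
        intro!: AE_cong intro: order.antisym)
qed

lemma nn_integral_bind_density:
  assumes K: "K \<in> A \<rightarrow>\<^sub>M subprob_algebra B" and sets_mu: "sets mu = sets A"
    and [measurable]: "g \<in> borel_measurable A" "phi \<in> borel_measurable B"
  shows "(\<integral>\<^sup>+x. phi x \<partial>(density mu g \<bind> K)) = (\<integral>\<^sup>+w. g w * (\<integral>\<^sup>+x. phi x \<partial>K w) \<partial>mu)"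
proof -
  have [measurable_cong]: "sets mu = sets A" by (fact sets_mu)
  have [measurable]: "K \<in> density mu g \<rightarrow>\<^sub>M subprob_algebra B"
    using K by (simp add: measurable_cong_sets[OF sets_mu refl])
  show ?thesis by (simp add: nn_integral_bind[where B=B] nn_integral_density)
qed

lemma density_bind_eq_density:
  assumes K: "K \<in> A \<rightarrow>\<^sub>M subprob_algebra B" and sets_mu: "sets mu = sets A" and sets_N: "sets N = sets B"
    and [measurable]: "g \<in> borel_measurable A" "h \<in> borel_measurable B" and "space A \<noteq> {}"
    and eq: "\<And>D. D \<in> sets B \<Longrightarrow> (\<integral>\<^sup>+w. g w * emeasure (K w) D \<partial>mu) = (\<integral>\<^sup>+x. indicator D x * h x \<partial>N)"
  shows "density mu g \<bind> K = density N h"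
proof -
  note [measurable_cong] = sets_mu sets_N
  have [measurable]: "K \<in> density mu g \<rightarrow>\<^sub>M subprob_algebra B"
    using K by (simp add: measurable_cong_sets[OF sets_mu refl])
  have sets_bind: "sets (density mu g \<bind> K) = sets B"
    using \<open>space A \<noteq> {}\<close> sets_eq_imp_space_eq[OF sets_mu] by (simp add: sets_bind_measurable)
  show ?thesis
  proof (rule measure_eqI)
    fix D assume "D \<in> sets (density mu g \<bind> K)"
    then have D[measurable]: "D \<in> sets B" by (simp add: sets_bind)
    have "emeasure (density mu g \<bind> K) D = (\<integral>\<^sup>+w. g w * (\<integral>\<^sup>+x. indicator D x \<partial>K w) \<partial>mu)"
      using nn_integral_bind_density[OF K sets_mu, of g "indicator D"] by (simp add: sets_bind)
    also have "\<dots> = (\<integral>\<^sup>+w. g w * emeasure (K w) D \<partial>mu)"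
      using measurable_space[OF K]
      by (intro nn_integral_cong) (simp add: space_subprob_algebra sets_eq_imp_space_eq[OF sets_mu])
    also have "\<dots> = emeasure (density N h) D"
      using eq[OF D] by (simp add: emeasure_density sets_N mult.commute)
    finally show "emeasure (density mu g \<bind> K) D = emeasure (density N h) D" .
  qed (simp add: sets_bind sets_N)
qed

(* Both sides integrate phi against a measure, density mu g \<bind> K and density N h respectively,
   and eq says that these measures agree. *)
lemma nn_integral_mult_kernel_eqI:
  assumes K: "K \<in> A \<rightarrow>\<^sub>M subprob_algebra B" and sets_mu: "sets mu = sets A" and sets_N: "sets N = sets B"
    and [measurable]: "g \<in> borel_measurable A" "h \<in> borel_measurable B" "phi \<in> borel_measurable B"
    and eq: "\<And>D. D \<in> sets B \<Longrightarrow> (\<integral>\<^sup>+w. g w * emeasure (K w) D \<partial>mu) = (\<integral>\<^sup>+x. indicator D x * h x \<partial>N)"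
  shows "(\<integral>\<^sup>+w. g w * (\<integral>\<^sup>+x. phi x \<partial>K w) \<partial>mu) = (\<integral>\<^sup>+x. phi x * h x \<partial>N)"
proof (cases "space A = {}")
  case True
  note [measurable_cong] = sets_N
  have space_mu: "space mu = {}" using True sets_eq_imp_space_eq[OF sets_mu] by simp
  have "(\<integral>\<^sup>+x. h x \<partial>N) = (\<integral>\<^sup>+x. indicator (space B) x * h x \<partial>N)"
    by (intro nn_integral_cong) (simp add: sets_eq_imp_space_eq[OF sets_N])
  also have "\<dots> = 0"
    using eq[of "space B"] by (simp add: nn_integral_empty[OF space_mu])
  finally have "AE x in N. h x = 0" by (simp add: nn_integral_0_iff_AE)
  then have "(\<integral>\<^sup>+x. phi x * h x \<partial>N) = 0"
    by (simp add: nn_integral_0_iff_AE) (erule eventually_mono; simp)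
  then show ?thesis by (simp add: nn_integral_empty[OF space_mu])
next
  case False
  note [measurable_cong] = sets_N
  have "(\<integral>\<^sup>+x. phi x \<partial>(density mu g \<bind> K)) = (\<integral>\<^sup>+x. phi x \<partial>density N h)"
    using density_bind_eq_density[OF K sets_mu sets_N _ _ False eq] by simp
  then show ?thesis
    by (simp add: nn_integral_bind_density[OF K sets_mu] nn_integral_density mult.commute)
qed

locale posterior_chain =
  fixes Om :: "'a measure" and X :: "'b measure" and mu :: "'a measure" and M :: "'b measure"
    and P :: "'a \<Rightarrow> 'b measure" and Q :: "'b \<Rightarrow> 'a measure"
  assumes P_kernel: "P \<in> Om \<rightarrow>\<^sub>M prob_algebra X" and Q_kernel: "Q \<in> X \<rightarrow>\<^sub>M prob_algebra Om"
    and sets_mu[measurable_cong]: "sets mu = sets Om" and sets_M[measurable_cong]: "sets M = sets X"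
    and joint: "\<forall>C\<in>sets Om. \<forall>B\<in>sets X.
      (\<integral>\<^sup>+w. indicator C w * emeasure (P w) B \<partial>mu) = (\<integral>\<^sup>+x. indicator B x * emeasure (Q x) C \<partial>M)"
begin

abbreviation R :: "'a \<Rightarrow> 'a measure" where
  "R \<equiv> \<lambda>w. P w \<bind> Q"

sublocale markov_kernel Om R
  by unfold_locales (rule measurable_bind_prob_space[OF P_kernel Q_kernel])

lemma P_subprob[measurable]: "P \<in> Om \<rightarrow>\<^sub>M subprob_algebra X"
  using P_kernel by (rule measurable_prob_algebraD)

lemma Q_subprob[measurable]: "Q \<in> X \<rightarrow>\<^sub>M subprob_algebra Om"
  using Q_kernel by (rule measurable_prob_algebraD)

lemma sets_P: "w \<in> space Om \<Longrightarrow> sets (P w) = sets X"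
  using measurable_space[OF P_kernel] by (auto simp: space_prob_algebra)

lemma sets_Q: "x \<in> space X \<Longrightarrow> sets (Q x) = sets Om"
  using measurable_space[OF Q_kernel] by (auto simp: space_prob_algebra)

lemma prob_space_Q: "x \<in> space X \<Longrightarrow> prob_space (Q x)"
  using measurable_space[OF Q_kernel] by (auto simp: space_prob_algebra)

lemma space_mu: "space mu = space Om"
  using sets_mu by (rule sets_eq_imp_space_eq)

lemma space_M: "space M = space X"
  using sets_M by (rule sets_eq_imp_space_eq)

lemma nn_integral_mult_P_eq:
  assumes [measurable]: "u \<in> borel_measurable Om" "phi \<in> borel_measurable X"
  shows "(\<integral>\<^sup>+w. u w * (\<integral>\<^sup>+x. phi x \<partial>P w) \<partial>mu) = (\<integral>\<^sup>+x. phi x * (\<integral>\<^sup>+w. u w \<partial>Q x) \<partial>M)"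
proof -
  have "(\<integral>\<^sup>+x. psi x * emeasure (Q x) C \<partial>M) = (\<integral>\<^sup>+w. indicator C w * (\<integral>\<^sup>+x. psi x \<partial>P w) \<partial>mu)"
    if [measurable]: "C \<in> sets Om" "psi \<in> borel_measurable X" for C psi
    using joint by (intro nn_integral_mult_kernel_eqI[OF P_subprob sets_mu sets_M, symmetric]) auto
  then show ?thesis
    by (intro nn_integral_mult_kernel_eqI[OF Q_subprob sets_M sets_mu, symmetric]) auto
qed

lemma Kop_eq: "w \<in> space Om \<Longrightarrow> f \<in> borel_measurable Om \<Longrightarrow> Kop f w = (\<integral>\<^sup>+x. (\<integral>\<^sup>+y. f y \<partial>Q x) \<partial>P w)"
  by (simp add: Kop_def nn_integral_bind[where B=Om] measurable_cong_sets[OF sets_P refl])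

lemma nn_integral_mult_Kop:
  assumes [measurable]: "u \<in> borel_measurable Om" "v \<in> borel_measurable Om"
  shows "(\<integral>\<^sup>+w. u w * Kop v w \<partial>mu) = (\<integral>\<^sup>+x. (\<integral>\<^sup>+y. v y \<partial>Q x) * (\<integral>\<^sup>+y. u y \<partial>Q x) \<partial>M)"
proof -
  have "(\<integral>\<^sup>+w. u w * Kop v w \<partial>mu) = (\<integral>\<^sup>+w. u w * (\<integral>\<^sup>+x. (\<integral>\<^sup>+y. v y \<partial>Q x) \<partial>P w) \<partial>mu)"
    by (intro nn_integral_cong) (simp add: Kop_eq space_mu)
  also have "\<dots> = (\<integral>\<^sup>+x. (\<integral>\<^sup>+y. v y \<partial>Q x) * (\<integral>\<^sup>+y. u y \<partial>Q x) \<partial>M)"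
    by (rule nn_integral_mult_P_eq) measurable
  finally show ?thesis .
qed

lemma nn_integral_mu_eq:
  assumes [measurable]: "u \<in> borel_measurable Om"
  shows "(\<integral>\<^sup>+w. u w \<partial>mu) = (\<integral>\<^sup>+x. (\<integral>\<^sup>+y. u y \<partial>Q x) \<partial>M)"
proof -
  have "(\<integral>\<^sup>+w. u w \<partial>mu) = (\<integral>\<^sup>+w. u w * (\<integral>\<^sup>+x. 1 \<partial>P w) \<partial>mu)"
    using measurable_space[OF P_kernel]
    by (intro nn_integral_cong) (simp add: space_mu space_prob_algebra prob_space.emeasure_space_1)
  also have "\<dots> = (\<integral>\<^sup>+x. 1 * (\<integral>\<^sup>+y. u y \<partial>Q x) \<partial>M)"
    by (rule nn_integral_mult_P_eq) measurable
  finally show ?thesis by simp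
qed

lemma nn_integral_Kop:
  assumes [measurable]: "v \<in> borel_measurable Om"
  shows "(\<integral>\<^sup>+w. Kop v w \<partial>mu) = (\<integral>\<^sup>+w. v w \<partial>mu)"
proof -
  have "(\<integral>\<^sup>+w. Kop v w \<partial>mu) = (\<integral>\<^sup>+x. (\<integral>\<^sup>+y. v y \<partial>Q x) * (\<integral>\<^sup>+y. 1 \<partial>Q x) \<partial>M)"
    using nn_integral_mult_Kop[of "\<lambda>_. 1" v] by simp
  also have "\<dots> = (\<integral>\<^sup>+x. (\<integral>\<^sup>+y. v y \<partial>Q x) \<partial>M)"
    by (intro nn_integral_cong) (simp add: space_M prob_space.emeasure_space_1[OF prob_space_Q])
  also have "\<dots> = (\<integral>\<^sup>+w. v w \<partial>mu)"
    by (rule nn_integral_mu_eq[symmetric]) measurable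
  finally show ?thesis .
qed

(* The Dirichlet form of R, see nn_integral_square_eq_energy. *)
definition energy :: "('a \<Rightarrow> ennreal) \<Rightarrow> ennreal" where
  "energy f = (\<integral>\<^sup>+x. ennreal (nn_variance (Q x) f) \<partial>M)"

lemma measurable_Q_cong: "x \<in> space X \<Longrightarrow> f \<in> borel_measurable (Q x) \<longleftrightarrow> f \<in> borel_measurable Om"
  by (simp add: measurable_cong_sets[OF sets_Q refl])

lemma nn_integral_square_eq_energy:
  assumes [measurable]: "f \<in> borel_measurable Om" and f: "\<And>w. f w \<le> 1"
  shows "(\<integral>\<^sup>+w. f w * f w \<partial>mu) = (\<integral>\<^sup>+w. f w * Kop f w \<partial>mu) + energy f"
proof -
  have "(\<integral>\<^sup>+w. f w * f w \<partial>mu) = (\<integral>\<^sup>+x. (\<integral>\<^sup>+y. f y * f y \<partial>Q x) \<partial>M)"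
    by (rule nn_integral_mu_eq) measurable
  also have "\<dots> = (\<integral>\<^sup>+x. (\<integral>\<^sup>+y. f y \<partial>Q x) * (\<integral>\<^sup>+y. f y \<partial>Q x) + ennreal (nn_variance (Q x) f) \<partial>M)"
    using f by (intro nn_integral_cong nn_integral_square_eq_variance[OF prob_space_Q])
      (auto simp: space_M measurable_Q_cong)
  also have "\<dots> = (\<integral>\<^sup>+x. (\<integral>\<^sup>+y. f y \<partial>Q x) * (\<integral>\<^sup>+y. f y \<partial>Q x) \<partial>M) + energy f"
    unfolding energy_def by (rule nn_integral_add) (simp_all add: nn_variance_def)
  also have "(\<integral>\<^sup>+x. (\<integral>\<^sup>+y. f y \<partial>Q x) * (\<integral>\<^sup>+y. f y \<partial>Q x) \<partial>M) = (\<integral>\<^sup>+w. f w * Kop f w \<partial>mu)"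
    by (rule nn_integral_mult_Kop[symmetric]) measurable
  finally show ?thesis .
qed

lemma nn_integral_hit_within_le:
  assumes C[measurable]: "C \<in> sets Om"
  shows "(\<integral>\<^sup>+w. hit_within C n w \<partial>mu) \<le> of_nat (Suc n) * emeasure mu C"
proof (induction n)
  case (Suc n)
  have "(\<integral>\<^sup>+w. hit_within C (Suc n) w \<partial>mu) \<le> (\<integral>\<^sup>+w. indicator C w + Kop (hit_within C n) w \<partial>mu)"
    by (intro nn_integral_mono) (auto simp: indicator_def)
  also have "\<dots> = emeasure mu C + (\<integral>\<^sup>+w. hit_within C n w \<partial>mu)"
    by (simp add: nn_integral_add nn_integral_Kop)
  also have "\<dots> \<le> of_nat (Suc (Suc n)) * emeasure mu C"
    using Suc by (simp add: distrib_right add_left_mono)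
  finally show ?case .
qed simp

lemma energy_hit_within_le:
  assumes C[measurable]: "C \<in> sets Om" and fin: "emeasure mu C < \<infinity>"
  shows "energy (hit_within C n) \<le> (\<integral>\<^sup>+w. indicator C w * (1 - Kop (hit_within C n) w) \<partial>mu)"
proof -
  define f where "f = hit_within C n"
  have f[measurable]: "f \<in> borel_measurable Om" and f_le: "\<And>w. f w \<le> 1"
    by (simp_all add: f_def hit_within_le_1)
  have "(\<integral>\<^sup>+w. f w * Kop f w \<partial>mu) + energy f = (\<integral>\<^sup>+w. f w * f w \<partial>mu)"
    by (simp add: nn_integral_square_eq_energy[OF f f_le])
  also have "\<dots> \<le> (\<integral>\<^sup>+w. indicator C w * (1 - Kop f w) + f w * Kop f w \<partial>mu)"
    unfolding f_def by (intro nn_integral_mono hit_within_square_le[OF C])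
  also have "\<dots> = (\<integral>\<^sup>+w. f w * Kop f w \<partial>mu) + (\<integral>\<^sup>+w. indicator C w * (1 - Kop f w) \<partial>mu)"
    by (subst nn_integral_add) (simp_all add: add.commute)
  finally have "(\<integral>\<^sup>+w. f w * Kop f w \<partial>mu) + energy f
      \<le> (\<integral>\<^sup>+w. f w * Kop f w \<partial>mu) + (\<integral>\<^sup>+w. indicator C w * (1 - Kop f w) \<partial>mu)" .
  moreover have "(\<integral>\<^sup>+w. f w * Kop f w \<partial>mu) < \<infinity>"
  proof -
    have "(\<integral>\<^sup>+w. f w * Kop f w \<partial>mu) \<le> (\<integral>\<^sup>+w. f w \<partial>mu)"
      by (rule nn_integral_mult_Kop_le[OF f_le])
    also have "\<dots> \<le> of_nat (Suc n) * emeasure mu C"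
      unfolding f_def by (rule nn_integral_hit_within_le[OF C])
    also have "\<dots> < \<infinity>"
      using fin by (simp add: ennreal_mult_less_top of_nat_less_top)
    finally show ?thesis .
  qed
  ultimately show ?thesis
    unfolding f_def by (simp add: ennreal_add_left_cancel_le less_top[symmetric])
qed

lemma energy_hit_le:
  assumes C[measurable]: "C \<in> sets Om" and fin: "emeasure mu C < \<infinity>"
  shows "energy (hit C) \<le> emeasure mu C"
proof -
  have "energy (hit C) = (\<integral>\<^sup>+x. liminf (\<lambda>n. ennreal (nn_variance (Q x) (hit_within C n))) \<partial>M)"
    unfolding energy_def
  proof (intro nn_integral_cong)
    fix x assume "x \<in> space M"
    then have x: "x \<in> space X" by (simp add: space_M)
    have "(\<lambda>n. nn_variance (Q x) (hit_within C n)) \<longlonglongrightarrow> nn_variance (Q x) (hit C)"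
      unfolding hit_def[abs_def]
      by (rule tendsto_nn_variance_SUP[OF prob_space_Q[OF x]])
        (simp_all add: measurable_Q_cong[OF x] hit_within_le_1 hit_within_Suc_mono del: hit_within.simps)
    then show "ennreal (nn_variance (Q x) (hit C)) = liminf (\<lambda>n. ennreal (nn_variance (Q x) (hit_within C n)))"
      by (intro lim_imp_Liminf[symmetric] tendsto_ennrealI) simp_all
  qed
  also have "\<dots> \<le> liminf (\<lambda>n. energy (hit_within C n))"
    unfolding energy_def by (rule nn_integral_liminf) (simp add: nn_variance_def)
  also have "\<dots> \<le> emeasure mu C"
  proof (rule Liminf_le[OF _ always_eventually[OF allI]])
    fix n
    have "energy (hit_within C n) \<le> (\<integral>\<^sup>+w. indicator C w * (1 - Kop (hit_within C n) w) \<partial>mu)"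
      by (rule energy_hit_within_le[OF C fin])
    also have "\<dots> \<le> (\<integral>\<^sup>+w. indicator C w \<partial>mu)"
      by (intro nn_integral_mono) (simp add: indicator_def)
    finally show "energy (hit_within C n) \<le> emeasure mu C" by simp
  qed simp
  finally show ?thesis .
qed

lemma nn_integral_mult_le_energies:
  assumes [measurable]: "f \<in> borel_measurable Om" "g \<in> borel_measurable Om"
    and f: "\<And>w. f w \<le> 1" and g: "\<And>w. g w \<le> 1" and lam: "lam > 0"
  shows "(\<integral>\<^sup>+w. f w * g w \<partial>mu)
    \<le> (\<integral>\<^sup>+w. f w * Kop g w \<partial>mu) + ennreal (lam / 2) * energy f + ennreal (1 / (2 * lam)) * energy g"
proof -
  have "(\<integral>\<^sup>+w. f w * g w \<partial>mu) = (\<integral>\<^sup>+x. (\<integral>\<^sup>+y. f y * g y \<partial>Q x) \<partial>M)"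
    by (rule nn_integral_mu_eq) measurable
  also have "\<dots> \<le> (\<integral>\<^sup>+x. (\<integral>\<^sup>+y. f y \<partial>Q x) * (\<integral>\<^sup>+y. g y \<partial>Q x)
        + ennreal (lam / 2) * ennreal (nn_variance (Q x) f)
        + ennreal (1 / (2 * lam)) * ennreal (nn_variance (Q x) g) \<partial>M)"
    using f g lam
    by (intro nn_integral_mono nn_integral_mult_le_variances[OF prob_space_Q])
      (auto simp: space_M measurable_Q_cong)
  also have "\<dots> = (\<integral>\<^sup>+w. f w * Kop g w \<partial>mu)
        + ennreal (lam / 2) * energy f + ennreal (1 / (2 * lam)) * energy g"
    by (simp add: nn_integral_add nn_integral_cmult nn_integral_mult_Kop energy_def nn_variance_def
        mult.commute)
  finally show ?thesis .
qed

lemma nn_integral_escape_le: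
  assumes C[measurable]: "C \<in> sets Om" and fin: "emeasure mu C < \<infinity>"
    and h[measurable]: "h \<in> borel_measurable Om" and h_le: "\<And>w. h w \<le> 1"
    and h_fin: "(\<integral>\<^sup>+w. h w \<partial>mu) < \<infinity>" and lam: "lam > 0"
  shows "(\<integral>\<^sup>+w. h w * (indicator C w * (1 - Kop (hit C) w)) \<partial>mu)
     \<le> ennreal (lam / 2) * energy h + ennreal (1 / (2 * lam)) * emeasure mu C"
proof -
  let ?escape = "\<lambda>w. h w * (indicator C w * (1 - Kop (hit C) w))"
  have "(\<integral>\<^sup>+w. h w * Kop (hit C) w \<partial>mu) + (\<integral>\<^sup>+w. ?escape w \<partial>mu) = (\<integral>\<^sup>+w. h w * hit C w \<partial>mu)"
    by (subst nn_integral_add[symmetric], simp_all, subst hit_eq_escape_plus_Kop[OF C])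
      (simp add: distrib_left add.commute)
  also have "\<dots> \<le> (\<integral>\<^sup>+w. h w * Kop (hit C) w \<partial>mu)
      + ennreal (lam / 2) * energy h + ennreal (1 / (2 * lam)) * energy (hit C)"
    using h_le lam by (intro nn_integral_mult_le_energies) (simp_all add: hit_le_1)
  also have "\<dots> \<le> (\<integral>\<^sup>+w. h w * Kop (hit C) w \<partial>mu)
      + (ennreal (lam / 2) * energy h + ennreal (1 / (2 * lam)) * emeasure mu C)"
    unfolding add.assoc by (intro add_left_mono mult_left_mono energy_hit_le[OF C fin]) simp
  finally have "(\<integral>\<^sup>+w. h w * Kop (hit C) w \<partial>mu) + (\<integral>\<^sup>+w. ?escape w \<partial>mu)
      \<le> (\<integral>\<^sup>+w. h w * Kop (hit C) w \<partial>mu)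
        + (ennreal (lam / 2) * energy h + ennreal (1 / (2 * lam)) * emeasure mu C)" .
  moreover have "(\<integral>\<^sup>+w. h w * Kop (hit C) w \<partial>mu) < \<infinity>"
    using nn_integral_mult_Kop_le[OF hit_le_1[OF C]] h_fin by (rule order.strict_trans1)
  ultimately show ?thesis
    by (simp add: ennreal_add_left_cancel_le less_top[symmetric])
qed

lemma escape_hit_within_tendsto_0:
  assumes C[measurable]: "C \<in> sets Om" and fin: "emeasure mu C < \<infinity>"
    and recurrent: "AE w in mu. w \<in> C \<longrightarrow> Kop (hit C) w = 1"
  shows "(\<lambda>n. \<integral>\<^sup>+w. indicator C w * (1 - Kop (hit_within C n) w) \<partial>mu) \<longlonglongrightarrow> 0"
proof -
  let ?return = "\<lambda>n. \<integral>\<^sup>+w. indicator C w * Kop (hit_within C n) w \<partial>mu"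
  have Kf_le: "Kop (hit_within C n) w \<le> 1" for n w
    by (intro Kop_le_1 hit_within_le_1[OF C])
  have inc: "incseq (\<lambda>n. indicator C w * Kop (hit_within C n) w)" for w
    by (intro incseq_SucI mult_left_mono Kop_mono hit_within_Suc_mono[OF C]) simp
  have "(SUP n. ?return n) = (\<integral>\<^sup>+w. (SUP n. indicator C w * Kop (hit_within C n) w) \<partial>mu)"
    using inc by (intro nn_integral_monotone_convergence_SUP[symmetric]) (auto simp: incseq_def le_fun_def)
  also have "\<dots> = (\<integral>\<^sup>+w. indicator C w \<partial>mu)"
    using recurrent by (intro nn_integral_cong_AE)
      (auto simp: Kop_hit[OF C, symmetric] SUP_mult_left_ennreal indicator_def)
  finally have "?return \<longlonglongrightarrow> emeasure mu C"
    using inc by (metis (mono_tags, lifting) LIMSEQ_SUP incseq_def le_funI nn_integral_indicator C sets_mu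
        nn_integral_mono)
  then have "(\<lambda>n. emeasure mu C - ?return n) \<longlonglongrightarrow> 0"
    using fin by (auto intro: tendsto_diff_ennreal[THEN tendsto_cong_limit])
  moreover have "(\<integral>\<^sup>+w. indicator C w * (1 - Kop (hit_within C n) w) \<partial>mu) = emeasure mu C - ?return n" for n
  proof -
    have "(\<integral>\<^sup>+w. indicator C w * (1 - Kop (hit_within C n) w) \<partial>mu)
        = (\<integral>\<^sup>+w. indicator C w - indicator C w * Kop (hit_within C n) w \<partial>mu)"
      by (intro nn_integral_cong) (simp add: indicator_def)
    also have "\<dots> = (\<integral>\<^sup>+w. indicator C w \<partial>mu) - ?return n"
    proof (rule nn_integral_diff)
      have "?return n \<le> (\<integral>\<^sup>+w. indicator C w \<partial>mu)"
        by (rule nn_integral_mult_Kop_le[OF hit_within_le_1[OF C]])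
      then show "?return n \<noteq> \<infinity>"
        using fin by (auto simp: top_unique)
    qed (simp_all add: Kf_le mult_left_le)
    finally show ?thesis by simp
  qed
  ultimately show ?thesis by simp
qed

lemma energy_hit_within_tendsto_0:
  assumes C[measurable]: "C \<in> sets Om" and fin: "emeasure mu C < \<infinity>"
    and recurrent: "AE w in mu. w \<in> C \<longrightarrow> Kop (hit C) w = 1"
  shows "(\<lambda>n. energy (hit_within C n)) \<longlonglongrightarrow> 0"
  using energy_hit_within_le[OF C fin]
  by (intro tendsto_sandwich[OF always_eventually always_eventually tendsto_const
        escape_hit_within_tendsto_0[OF C fin recurrent]]) simp_all

lemma AE_return_if_energy_tendsto_0:
  assumes C[measurable]: "C \<in> sets Om" and fin: "emeasure mu C < \<infinity>" and S[measurable]: "S \<in> sets Om"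
    and h[measurable]: "\<And>n. h n \<in> borel_measurable Om" and h_le: "\<And>n w. h n w \<le> 1"
    and h_fin: "\<And>n. (\<integral>\<^sup>+w. h n w \<partial>mu) < \<infinity>" and h_S: "\<And>n w. w \<in> S \<Longrightarrow> h n w = 1"
    and energy_0: "(\<lambda>n. energy (h n)) \<longlonglongrightarrow> 0"
  shows "AE w in mu. w \<in> S \<longrightarrow> w \<in> C \<longrightarrow> Kop (hit C) w = 1"
proof -
  let ?escape = "\<lambda>w. indicator C w * (1 - Kop (hit C) w)"
  have "(\<integral>\<^sup>+w. indicator S w * ?escape w \<partial>mu) \<le> ennreal e * emeasure mu C" if e: "e > 0" for e
  proof (rule tendsto_lowerbound)
    have lam: "1 / (2 * e) > 0" using e by simp
    have "(\<integral>\<^sup>+w. indicator S w * ?escape w \<partial>mu) \<le> (\<integral>\<^sup>+w. h n w * ?escape w \<partial>mu)" for n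
      by (intro nn_integral_mono mult_right_mono) (auto simp: indicator_def h_S)
    also have "\<dots> n \<le> ennreal (1 / (4 * e)) * energy (h n) + ennreal e * emeasure mu C" for n
      using nn_integral_escape_le[OF C fin h h_le h_fin lam] e by simp
    finally show "\<forall>\<^sub>F n in sequentially. (\<integral>\<^sup>+w. indicator S w * ?escape w \<partial>mu)
        \<le> ennreal (1 / (4 * e)) * energy (h n) + ennreal e * emeasure mu C"
      by simp
    show "(\<lambda>n. ennreal (1 / (4 * e)) * energy (h n) + ennreal e * emeasure mu C)
        \<longlonglongrightarrow> ennreal e * emeasure mu C"
      using tendsto_add[OF tendsto_mult_ennreal[OF tendsto_const energy_0] tendsto_const] by simp
  qed simp
  then have "(\<integral>\<^sup>+w. indicator S w * ?escape w \<partial>mu) = 0"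
    using fin by (intro ennreal_eq_0_if_le_epsilon_mult) auto
  then have "AE w in mu. indicator S w * ?escape w = 0"
    by (simp add: nn_integral_0_iff_AE)
  then show ?thesis
  proof eventually_elim
    case (elim w)
    have "Kop (hit C) w \<le> 1" by (intro Kop_le_1 hit_le_1[OF C])
    with elim show ?case by (auto simp: indicator_def intro: order.antisym ennreal_minus_eq_0)
  qed
qed

end

locale statistic_reduction =
  orig: posterior_chain Om X mu M P Q + red: posterior_chain T X s M Pt Qt
  for Om :: "'a measure" and X :: "'b measure" and mu M P Q
    and T :: "'c measure" and s Pt Qt +
  fixes t :: "'a \<Rightarrow> 'c" and pi :: "'c \<Rightarrow> 'a measure"
  assumes sigma_finite_M: "sigma_finite_measure M"
    and t_measurable[measurable]: "t \<in> Om \<rightarrow>\<^sub>M T"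
    and s_eq: "s = distr mu T t"
    and pi_kernel: "pi \<in> T \<rightarrow>\<^sub>M prob_algebra Om"
    and Pt_eq: "\<And>a. Pt a = pi a \<bind> P"
    and disintegration: "\<forall>f1 \<in> borel_measurable Om. \<forall>f2 \<in> borel_measurable T.
      (\<integral>\<^sup>+\<theta>. f2 (t \<theta>) * f1 \<theta> \<partial>mu) = (\<integral>\<^sup>+a. f2 a * (\<integral>\<^sup>+\<theta>. f1 \<theta> \<partial>pi a) \<partial>s)"
begin

lemma AE_nn_integral_Q_comp:
  assumes g[measurable]: "g \<in> borel_measurable T"
  shows "AE x in M. (\<integral>\<^sup>+\<theta>. g (t \<theta>) \<partial>Q x) = (\<integral>\<^sup>+a. g a \<partial>Qt x)"
proof (rule sigma_finite_measure.density_unique2[OF sigma_finite_M])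
  fix B assume "B \<in> sets M"
  then have B[measurable]: "B \<in> sets X" by (simp add: orig.sets_M)
  have "(\<integral>\<^sup>+x\<in>B. (\<integral>\<^sup>+\<theta>. g (t \<theta>) \<partial>Q x) \<partial>M) = (\<integral>\<^sup>+\<theta>. g (t \<theta>) * (\<integral>\<^sup>+x. indicator B x \<partial>P \<theta>) \<partial>mu)"
    by (subst orig.nn_integral_mult_P_eq) (simp_all add: mult.commute)
  also have "\<dots> = (\<integral>\<^sup>+\<theta>. g (t \<theta>) * emeasure (P \<theta>) B \<partial>mu)"
    by (intro nn_integral_cong) (simp add: orig.space_mu orig.sets_P)
  also have "\<dots> = (\<integral>\<^sup>+a. g a * (\<integral>\<^sup>+\<theta>. emeasure (P \<theta>) B \<partial>pi a) \<partial>s)"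
    by (rule disintegration[rule_format, OF measurable_emeasure_kernel[OF orig.P_subprob B] g])
  also have "\<dots> = (\<integral>\<^sup>+a. g a * emeasure (Pt a) B \<partial>s)"
    using measurable_space[OF pi_kernel] red.space_mu
    by (intro nn_integral_cong) (simp add: Pt_eq emeasure_bind_prob_algebra[OF _ orig.P_kernel B])
  also have "\<dots> = (\<integral>\<^sup>+a. g a * (\<integral>\<^sup>+x. indicator B x \<partial>Pt a) \<partial>s)"
    by (intro nn_integral_cong) (simp add: red.space_mu red.sets_P)
  also have "\<dots> = (\<integral>\<^sup>+x\<in>B. (\<integral>\<^sup>+a. g a \<partial>Qt x) \<partial>M)"
    by (subst red.nn_integral_mult_P_eq) (simp_all add: mult.commute)
  finally show "(\<integral>\<^sup>+x\<in>B. (\<integral>\<^sup>+\<theta>. g (t \<theta>) \<partial>Q x) \<partial>M) = (\<integral>\<^sup>+x\<in>B. (\<integral>\<^sup>+a. g a \<partial>Qt x) \<partial>M)" .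
qed (simp_all add: measurable_cong_sets[OF orig.sets_M refl])

lemma energy_comp:
  assumes [measurable]: "g \<in> borel_measurable T"
  shows "orig.energy (\<lambda>\<theta>. g (t \<theta>)) = red.energy g"
  unfolding orig.energy_def red.energy_def
  using AE_nn_integral_Q_comp[of g] AE_nn_integral_Q_comp[of "\<lambda>a. g a * g a"]
  by (intro nn_integral_cong_AE) (auto simp: nn_variance_def)

lemma AE_return_on_preimage:
  assumes D: "proper_set s D" and recurrent: "locally_recurrent_set T red.R s D"
    and C[measurable]: "C \<in> sets Om" and fin: "emeasure mu C < \<infinity>"
  shows "AE w in mu. t w \<in> D \<longrightarrow> w \<in> C \<longrightarrow> orig.Kop (orig.hit C) w = 1"
proof -
  have D_sets[measurable]: "D \<in> sets T" and D_fin: "emeasure s D < \<infinity>"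
    using D by (simp_all add: proper_set_def red.sets_mu)
  define h where "h n w = red.hit_within D n (t w)" for n w
  have [measurable]: "h n \<in> borel_measurable Om" for n
    unfolding h_def by measurable
  have "AE w in mu. w \<in> t -` D \<inter> space Om \<longrightarrow> w \<in> C \<longrightarrow> orig.Kop (orig.hit C) w = 1"
  proof (rule orig.AE_return_if_energy_tendsto_0[OF C fin, where h=h])
    show "(\<integral>\<^sup>+w. h n w \<partial>mu) < \<infinity>" for n
    proof -
      have "(\<integral>\<^sup>+w. h n w \<partial>mu) = (\<integral>\<^sup>+a. red.hit_within D n a \<partial>s)"
        unfolding h_def s_eq
        by (rule nn_integral_distr[symmetric]) (simp_all add: measurable_cong_sets[OF orig.sets_mu refl])
      also have "\<dots> \<le> of_nat (Suc n) * emeasure s D"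
        by (rule red.nn_integral_hit_within_le[OF D_sets])
      also have "\<dots> < \<infinity>"
        using D_fin by (simp add: ennreal_mult_less_top of_nat_less_top)
      finally show ?thesis .
    qed
    have "red.energy (red.hit_within D n) = orig.energy (h n)" for n
      unfolding h_def by (rule energy_comp[symmetric]) simp
    then show "(\<lambda>n. orig.energy (h n)) \<longlonglongrightarrow> 0"
      using red.energy_hit_within_tendsto_0[OF D_sets D_fin]
        recurrent[unfolded red.locally_recurrent_set_iff[OF red.sets_mu D]]
      by simp
  qed (auto simp: h_def red.hit_within_le_1 red.hit_within_in)
  then show ?thesis
    by (simp add: orig.space_mu[symmetric])
qed

lemma locally_recurrent_if_preimages_cover:
  fixes A :: "'i::countable \<Rightarrow> 'c set"
  assumes proper: "\<And>i. proper_set s (A i)" and recurrent: "\<And>i. locally_recurrent_set T red.R s (A i)"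
    and cover: "\<And>w. w \<in> space Om \<Longrightarrow> \<exists>i. t w \<in> A i"
  shows "locally_recurrent Om orig.R mu"
  unfolding locally_recurrent_def
proof (intro allI impI)
  fix C assume C: "proper_set mu C"
  then have [measurable]: "C \<in> sets Om" and fin: "emeasure mu C < \<infinity>"
    by (simp_all add: proper_set_def orig.sets_mu)
  have "AE w in mu. \<forall>i. t w \<in> A i \<longrightarrow> w \<in> C \<longrightarrow> orig.Kop (orig.hit C) w = 1"
    using AE_return_on_preimage[OF proper recurrent _ fin] by (subst AE_all_countable) simp
  with AE_space show "locally_recurrent_set Om orig.R mu C"
    unfolding orig.locally_recurrent_set_iff[OF orig.sets_mu C]
    by eventually_elim (use cover in \<open>auto simp: orig.space_mu\<close>)
qed

end

theorem theorem3p4: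
  fixes P :: "'th::polish_space \<Rightarrow> 'x::polish_space measure"
    and \<nu> :: "'th measure" and M :: "'x measure" and Q :: "'x \<Rightarrow> 'th measure"
    and t :: "'th \<Rightarrow> real" and A :: "nat \<Rightarrow> real set"
    and \<pi> :: "real \<Rightarrow> 'th measure" and Qt :: "'x \<Rightarrow> real measure"
    and s :: "real measure" and Pt :: "real \<Rightarrow> 'x measure"
  assumes P_kernel: "P \<in> borel \<rightarrow>\<^sub>M prob_algebra borel"
    and nu_sets: "sets \<nu> = sets borel" and nu_sf: "sigma_finite_measure \<nu>"
    and M_sets: "sets M = sets borel"
    and M_def: "\<forall>B \<in> sets borel. emeasure M B = (\<integral>\<^sup>+ \<theta>. emeasure (P \<theta>) B \<partial>\<nu>)"
    and M_sf: "sigma_finite_measure M"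
    and Q_kernel: "Q \<in> borel \<rightarrow>\<^sub>M prob_algebra borel"
    and Q_joint: "\<forall>C \<in> sets borel. \<forall>B \<in> sets borel.
        (\<integral>\<^sup>+ \<theta>. indicator C \<theta> * emeasure (P \<theta>) B \<partial>\<nu>) = (\<integral>\<^sup>+ x. indicator B x * emeasure (Q x) C \<partial>M)"
    and t_meas: "t \<in> borel_measurable borel" and t_nonneg: "\<forall>\<theta>. 0 \<le> t \<theta>"
    and s_def: "s = distr \<nu> nonneg_reals t"
    and A_sets: "\<forall>i. A i \<in> sets borel" and A_disj: "disjoint_family A"
    and A_cover: "(\<Union>i. A i) = {0..}"
    and A_proper: "\<forall>i. 0 < emeasure \<nu> (t -` A i) \<and> emeasure \<nu> (t -` A i) < \<infinity>"
    and pi_kernel: "\<pi> \<in> nonneg_reals \<rightarrow>\<^sub>M prob_algebra borel"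
    and pi_disint: "\<forall>f1 \<in> borel_measurable (borel :: 'th measure). \<forall>f2 \<in> borel_measurable nonneg_reals.
        (\<integral>\<^sup>+ \<theta>. f2 (t \<theta>) * f1 \<theta> \<partial>\<nu>) = (\<integral>\<^sup>+ a. f2 a * (\<integral>\<^sup>+ \<theta>. f1 \<theta> \<partial>\<pi> a) \<partial>s)"
    and Pt_def: "\<forall>a. Pt a = bind (\<pi> a) P"
    and Qt_kernel: "Qt \<in> borel \<rightarrow>\<^sub>M prob_algebra nonneg_reals"
    and Qt_joint: "\<forall>C \<in> sets nonneg_reals. \<forall>B \<in> sets borel.
        (\<integral>\<^sup>+ a. indicator C a * emeasure (Pt a) B \<partial>s) = (\<integral>\<^sup>+ x. indicator B x * emeasure (Qt x) C \<partial>M)"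
    and tilde_rec: "locally_recurrent nonneg_reals (\<lambda>b. bind (Pt b) Qt) s"
  shows "locally_recurrent borel (\<lambda>\<eta>. bind (P \<eta>) Q) \<nu>"
proof -
  have Pt_kernel: "Pt \<in> nonneg_reals \<rightarrow>\<^sub>M prob_algebra borel"
    using measurable_bind_prob_space[OF pi_kernel P_kernel] ext[of Pt, OF Pt_def[rule_format]] by simp
  have t_measurable: "t \<in> borel \<rightarrow>\<^sub>M nonneg_reals"
    unfolding nonneg_reals_def using t_meas t_nonneg by (intro measurable_restrict_space2) auto
  interpret statistic_reduction borel borel \<nu> M P Q nonneg_reals s Pt Qt t \<pi>
    using P_kernel Q_kernel nu_sets M_sets Q_joint Pt_kernel Qt_kernel Qt_joint
      M_sf t_measurable pi_kernel Pt_def pi_disint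
    by (intro statistic_reduction.intro posterior_chain.intro statistic_reduction_axioms.intro)
      (simp_all add: s_def)
  have "proper_set s (A i)" for i
  proof -
    have "A i \<in> sets nonneg_reals"
      using A_sets A_cover unfolding nonneg_reals_def by (auto simp: sets_restrict_space_iff)
    moreover have "t -` A i \<inter> space \<nu> = t -` A i"
      by (simp add: sets_eq_imp_space_eq[OF nu_sets])
    ultimately show ?thesis
      using A_proper t_measurable
      by (simp add: proper_set_def s_def emeasure_distr measurable_cong_sets[OF nu_sets refl])
  qed
  moreover have "\<exists>i. t w \<in> A i" for w
    using A_cover t_nonneg by (metis UN_E atLeast_iff)
  ultimately show ?thesis
    using tilde_rec by (intro locally_recurrent_if_preimages_cover) (auto simp: locally_recurrent_def)
qed

end
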